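(* Let $\Sigma$ be a finite set and $n\geq 1$. Every nonempty subset $C\subseteq\Sigma^n$ satisfying property (A) has cardinality at least $2^n$.
   Context: A set $M\subseteq\Sigma^n$ satisfies property (A) if for every element $\bar x\in M$ and every position $i\in\{1,\dots,n\}$ there exists another element $\bar y\in M$, $\bar y\neq\bar x$, that differs from $\bar x$ only in position $i$. *)

theory Defs
  imports Main
begin

text \<open>Sigma^n is represented as lists of length n with entries in Sigma; positions are 0..n-1.\<close>

definition words :: "'a set \<Rightarrow> nat \<Rightarrow> 'a list set" where
  "words \<Sigma> n = {xs. length xs = n \<and> set xs \<subseteq> \<Sigma>}"

definition property_A :: "nat \<Rightarrow> 'a list set \<Rightarrow> bool" where
  "property_A n M \<longleftrightarrow>
     (\<forall>x\<in>M. \<forall>i<n. \<exists>y\<in>M. y \<noteq> x \<and> (\<forall>j<n. j \<noteq> i \<longrightarrow> y ! j = x ! j))"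

end

theory Submission
  imports Defs
begin

text \<open>Induction on \<open>n\<close>, splitting words by their first letter. For a letter \<open>a\<close>, the tails
  \<open>(#) a -` C\<close> again have property (A) in dimension \<open>n - 1\<close>, since a neighbour of \<open>a # t\<close>
  at a position \<open>i > 0\<close> still starts with \<open>a\<close>. The neighbour of any word at position \<open>0\<close> has
  the same tail and a different first letter, so at least two such tail sets are nonempty;
  each has at least \<open>2^(n-1)\<close> elements, and they embed disjointly into \<open>C\<close>.\<close>

lemma property_A_Cons_vimage:
  assumes len: "\<forall>x\<in>C. length x = Suc n" and A: "property_A (Suc n) C"
  shows "property_A n ((#) a -` C)"
  unfolding property_A_def
proof (intro ballI allI impI)
  fix t i assume "t \<in> (#) a -` C" and "i < n"
  then have "a # t \<in> C" and "Suc i < Suc n" by simp_all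
  with A obtain y where "y \<in> C" and "y \<noteq> a # t"
    and agree: "\<forall>j<Suc n. j \<noteq> Suc i \<longrightarrow> y ! j = (a # t) ! j"
    unfolding property_A_def by blast
  have "length y = Suc n" using len \<open>y \<in> C\<close> by blast
  then obtain b s where y: "y = b # s" by (auto simp: length_Suc_conv)
  have "b = a" using agree[rule_format, of 0] y by simp
  have "s ! j = t ! j" if "j < n" and "j \<noteq> i" for j
    using agree[rule_format, of "Suc j"] y that by simp
  moreover have "s \<in> (#) a -` C" and "s \<noteq> t"
    using \<open>y \<in> C\<close> \<open>y \<noteq> a # t\<close> y \<open>b = a\<close> by simp_all
  ultimately show "\<exists>s\<in>(#) a -` C. s \<noteq> t \<and> (\<forall>j<n. j \<noteq> i \<longrightarrow> s ! j = t ! j)" by blast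
qed

lemma property_A_other_head:
  assumes len: "\<forall>x\<in>C. length x = Suc n" and A: "property_A (Suc n) C" and "a # t \<in> C"
  shows "\<exists>b. b \<noteq> a \<and> b # t \<in> C"
proof -
  obtain y where "y \<in> C" and "y \<noteq> a # t"
    and agree: "\<forall>j<Suc n. j \<noteq> 0 \<longrightarrow> y ! j = (a # t) ! j"
    using A \<open>a # t \<in> C\<close> unfolding property_A_def by blast
  have "length y = Suc n" using len \<open>y \<in> C\<close> by blast
  then obtain b s where y: "y = b # s" and "length s = n" by (auto simp: length_Suc_conv)
  have "s = t"
  proof (rule nth_equalityI)
    show "length s = length t" using len \<open>a # t \<in> C\<close> \<open>length s = n\<close> by force
    show "s ! j = t ! j" if "j < length s" for j
      using agree[rule_format, of "Suc j"] y that \<open>length s = n\<close> by simp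
  qed
  with \<open>y \<in> C\<close> \<open>y \<noteq> a # t\<close> y show ?thesis by blast
qed

lemma finite_Cons_vimage: "finite C \<Longrightarrow> finite ((#) a -` C)"
  by (rule finite_vimageI) (simp_all add: inj_on_def)

lemma card_Cons_vimage_add_le:
  assumes "finite C" and "a \<noteq> b"
  shows "card ((#) a -` C) + card ((#) b -` C) \<le> card C"
proof -
  have inj: "inj_on ((#) c) A" for c and A :: "'a list set" by (simp add: inj_on_def)
  have "card ((#) a -` C) + card ((#) b -` C) = card ((#) a ` ((#) a -` C)) + card ((#) b ` ((#) b -` C))"
    by (simp only: card_image[OF inj])
  also have "\<dots> = card ((#) a ` ((#) a -` C) \<union> (#) b ` ((#) b -` C))"
    using \<open>a \<noteq> b\<close> finite_Cons_vimage[OF \<open>finite C\<close>] by (intro card_Un_disjoint[symmetric] finite_imageI) auto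
  also have "\<dots> \<le> card C" using \<open>finite C\<close> by (intro card_mono) auto
  finally show ?thesis .
qed

lemma property_A_card_ge:
  assumes "finite C" and "C \<noteq> {}" and "\<forall>x\<in>C. length x = n" and "property_A n C"
  shows "2 ^ n \<le> card C"
  using assms
proof (induction n arbitrary: C)
  case 0
  then show ?case by (simp add: Suc_le_eq card_gt_0_iff)
next
  case (Suc n)
  obtain x where "x \<in> C" using Suc.prems(2) by blast
  moreover have "x \<noteq> []" using Suc.prems(3) \<open>x \<in> C\<close> by force
  ultimately obtain a t where at: "a # t \<in> C" by (cases x) auto
  then obtain b where "b \<noteq> a" and bt: "b # t \<in> C"
    using property_A_other_head[OF Suc.prems(3,4)] by blast
  have IH: "2 ^ n \<le> card ((#) c -` C)" if "c # t \<in> C" for c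
  proof (rule Suc.IH)
    show "finite ((#) c -` C)" using finite_Cons_vimage Suc.prems(1) .
    show "(#) c -` C \<noteq> {}" using that by blast
    show "\<forall>x\<in>(#) c -` C. length x = n" using Suc.prems(3) by fastforce
    show "property_A n ((#) c -` C)" using property_A_Cons_vimage Suc.prems(3,4) .
  qed
  have "2 ^ Suc n \<le> card ((#) a -` C) + card ((#) b -` C)"
    using IH[OF at] IH[OF bt] by simp
  also have "\<dots> \<le> card C" using card_Cons_vimage_add_le[OF Suc.prems(1)] \<open>b \<noteq> a\<close> by simp
  finally show ?case .
qed

theorem proposition1:
  fixes \<Sigma> :: "'a set" and n :: nat and C :: "'a list set"
  assumes "finite \<Sigma>" and "n \<ge> 1"
    and "C \<subseteq> words \<Sigma> n" and "C \<noteq> {}"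
    and "property_A n C"
  shows "card C \<ge> 2 ^ n"
proof (rule property_A_card_ge)
  have "finite (words \<Sigma> n)"
    using finite_lists_length_eq[OF assms(1), of n] by (simp add: words_def conj_commute)
  then show "finite C" using assms(3) finite_subset by blast
  show "\<forall>x\<in>C. length x = n" using assms(3) by (auto simp: words_def)
qed (use assms(4,5) in auto)

end
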